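(* Let $a_x,b_x$ be linearly independent linear forms. (A1) For a linear form $f$: $J[f,a_x,b_x]=0$ iff $f=g_0a_x+h_0b_x$ for some $g_0,h_0\in\mathbb C$. (B1) For a quadratic form $f$: $J[f,a_x,b_x]=0$ iff $f=g_0a_x^2+h_0a_xb_x+k_0b_x^2$ for some constants $g_0,h_0,k_0$. (B2) For a quadratic form $f$: $J^2[f,a_x^2,b_x^2]=0$ iff $f=g_xa_x+h_xb_x$ for some linear forms $g_x,h_x$. (C1) For a cubic form $f$: $J[f,a_x,b_x]=0$ iff $f=g_0a_x^3+h_0a_x^2b_x+k_0a_xb_x^2+i_0b_x^3$ for some constants $g_0,h_0,k_0,i_0$. (C2) For a cubic form $f$: $J^2[f,a_x^2,b_x^2]=0$ iff $f=g_xa_x^2+h_xa_xb_x+k_xb_x^2$ for some linear forms $g_x,h_x,k_x$. (C3) For a cubic form $f$: $J^3[f,a_x^3,b_x^3]=0$ iff $f=g_{xx}a_x+h_{xx}b_x$ for some quadratic forms $g_{xx},h_{xx}$.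
   Context: Forms are homogeneous polynomials with complex coefficients in $x=(x_1,x_2,x_3)$. For $a\in\mathbb C^3$, $a_x=a_1x_1+a_2x_2+a_3x_3$. For forms $f,g,h$ and $n\ge1$, the $n$-th transvectant is $J^n[f,g,h]=\big(\Omega^n(f(x)g(y)h(z))\big)|_{y=z=x}$, where $\Omega$ is the determinant of the operator matrix with rows $(\partial/\partial x_i)$, $(\partial/\partial y_i)$, $(\partial/\partial z_i)$. Equivalently, expand $\det(a,b,c)^n$ and replace each monomial $a^\alpha b^\beta c^\gamma$ by $\partial^\alpha f\,\partial^\beta g\,\partial^\gamma h$. Write $J=J^1$ (the Jacobian determinant). *)

theory Defs
  imports Complex_Main "HOL-Combinatorics.Permutations"
begin

text \<open>A ternary form is represented by its coefficient function:
  f (i,j,k) is the coefficient of x1^i x2^j x3^k.  Coordinates are indexed 0,1,2.\<close>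
type_synonym form = "nat \<times> nat \<times> nat \<Rightarrow> complex"

definition hom :: "nat \<Rightarrow> form \<Rightarrow> bool" where
  "hom d f \<longleftrightarrow> (\<forall>i j k. f (i,j,k) \<noteq> 0 \<longrightarrow> i + j + k = d)"

definition fadd :: "form \<Rightarrow> form \<Rightarrow> form" where
  "fadd f g = (\<lambda>e. f e + g e)"

definition fsmult :: "complex \<Rightarrow> form \<Rightarrow> form" where
  "fsmult c f = (\<lambda>e. c * f e)"

definition fmul :: "form \<Rightarrow> form \<Rightarrow> form" where
  "fmul f g = (\<lambda>(i,j,k). \<Sum>(p,q,r)\<in>{0..i}\<times>{0..j}\<times>{0..k}. f (p,q,r) * g (i-p, j-q, k-r))"

definition lform :: "(nat \<Rightarrow> complex) \<Rightarrow> form" where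
  "lform a = (\<lambda>e. if e = (1,0,0) then a 0 else if e = (0,1,0) then a 1
                 else if e = (0,0,1) then a 2 else 0)"

definition pd :: "nat \<Rightarrow> form \<Rightarrow> form" where
  "pd m f = (\<lambda>(i,j,k).
     if m = 0 then of_nat (i+1) * f (i+1,j,k)
     else if m = 1 then of_nat (j+1) * f (i,j+1,k)
     else of_nat (k+1) * f (i,j,k+1))"

fun dmulti :: "nat list \<Rightarrow> form \<Rightarrow> form" where
  "dmulti [] f = f"
| "dmulti (m # ms) f = pd m (dmulti ms f)"

definition perms3 :: "(nat \<Rightarrow> nat) set" where
  "perms3 = {p. p permutes {0,1,2}}"

text \<open>n-th transvectant: Omega^n (f(x) g(y) h(z)) at y = z = x, where
  Omega = sum over permutations p of sign p * d_{x,p 0} d_{y,p 1} d_{z,p 2}.\<close>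
definition transv :: "nat \<Rightarrow> form \<Rightarrow> form \<Rightarrow> form \<Rightarrow> form" where
  "transv n f g h =
     (\<lambda>e. \<Sum>ps\<in>{ps. length ps = n \<and> set ps \<subseteq> perms3}.
        of_int (\<Prod>p\<leftarrow>ps. sign p) *
        fmul (fmul (dmulti (map (\<lambda>p. p 0) ps) f) (dmulti (map (\<lambda>p. p 1) ps) g))
             (dmulti (map (\<lambda>p. p 2) ps) h) e)"

definition zero_form :: form where "zero_form = (\<lambda>_. 0)"

definition lin_indep2 :: "(nat \<Rightarrow> complex) \<Rightarrow> (nat \<Rightarrow> complex) \<Rightarrow> bool" where
  "lin_indep2 a b \<longleftrightarrow> (\<forall>u v. (\<forall>i<3. u * a i + v * b i = 0) \<longrightarrow> u = 0 \<and> v = 0)"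

end

(* Expanding det(a, b, c)^n shows J^n[f, a_x^n, b_x^n] = (n!)^2 D^n f, where D is the derivative in
   the direction a \<times> b; so each claim describes the kernel of D^k on forms of degree d.
   Complete a, b to a basis (a, b, l) whose dual basis is (p, q, a \<times> b).  Euler's identity then
   reads d f = (D_p f) a_x + (D_q f) b_x + (D f) l_x, while D annihilates a_x, b_x and commutes with
   D_p, D_q.  Hence D f = 0 puts f into the ideal (a_x, b_x) with coefficients D_p f / d, D_q f / d
   again in the kernel of D, and D f = K a_x + K' b_x gives
   d f = (D_p f + K l_x) a_x + (D_q f + K' l_x) b_x. *)

theory Submission
  imports Defs
begin

section \<open>Arithmetic of forms\<close>

lemma fadd_apply [simp]: "fadd f g e = f e + g e"
  by (simp add: fadd_def)

lemma fsmult_apply [simp]: "fsmult c f e = c * f e"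
  by (simp add: fsmult_def)

lemma zero_form_apply [simp]: "zero_form e = 0"
  by (simp add: zero_form_def)

lemma fmul_apply:
  "fmul f g (i,j,k) = (\<Sum>x\<in>{0..i}\<times>{0..j}\<times>{0..k}. f x * g (i - fst x, j - fst (snd x), k - snd (snd x)))"
  by (simp add: fmul_def split_def)

lemma fmul_commute: "fmul f g = fmul g f"
proof (intro ext, clarify)
  fix i j k
  show "fmul f g (i,j,k) = fmul g f (i,j,k)"
    unfolding fmul_def prod.case
    by (rule sum.reindex_bij_witness[where i="\<lambda>(p,q,r). (i-p,j-q,k-r)" and j="\<lambda>(p,q,r). (i-p,j-q,k-r)"])
       (auto simp: mult.commute)
qed

lemma fmul_fadd_right: "fmul f (fadd g h) = fadd (fmul f g) (fmul f h)"
  by (intro ext, clarify) (simp add: fmul_apply distrib_left sum.distrib)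

lemma fmul_fadd_left: "fmul (fadd g h) f = fadd (fmul g f) (fmul h f)"
  by (metis fmul_commute fmul_fadd_right)

lemma fmul_fsmult_right: "fmul f (fsmult c g) = fsmult c (fmul f g)"
  by (intro ext, clarify) (simp add: fmul_apply sum_distrib_left ac_simps)

lemma fmul_fsmult_left: "fmul (fsmult c g) f = fsmult c (fmul g f)"
  by (metis fmul_commute fmul_fsmult_right)

lemma fmul_zero_left: "fmul zero_form f = zero_form"
  by (intro ext, clarify) (simp add: fmul_apply)

lemma fadd_zero_right: "fadd f zero_form = f"
  by (rule ext) simp

lemma fsmult_zero_right: "fsmult c zero_form = zero_form"
  by (rule ext) simp

lemma fsmult_zero_left: "fsmult 0 f = zero_form"
  by (rule ext) simp

lemma fsmult_one: "fsmult 1 f = f"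
  by (rule ext) simp

lemma fsmult_fsmult: "fsmult c (fsmult d f) = fsmult (c * d) f"
  by (rule ext) simp

lemma fsmult_fadd: "fsmult c (fadd f g) = fadd (fsmult c f) (fsmult c g)"
  by (rule ext) (simp add: distrib_left)

lemma fsmult_inverse: "c \<noteq> 0 \<Longrightarrow> fsmult c f = g \<Longrightarrow> f = fsmult (1 / c) g"
  by (drule sym) (simp add: fsmult_fsmult fsmult_one)

lemma fsmult_eq_zero_iff: "c \<noteq> 0 \<Longrightarrow> fsmult c f = zero_form \<longleftrightarrow> f = zero_form"
  by (auto simp: fun_eq_iff)

definition const_form :: "complex \<Rightarrow> form" where
  "const_form c = (\<lambda>e. if e = (0,0,0) then c else 0)"

lemma const_form_zero: "const_form 0 = zero_form"
  by (rule ext) (simp add: const_form_def)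

lemma fsmult_const_form: "fsmult c (const_form d) = const_form (c * d)"
  by (rule ext) (simp add: const_form_def)

lemma fmul_const_form_right: "fmul f (const_form c) = fsmult c f"
proof (intro ext, clarify)
  fix i j k
  have "fmul f (const_form c) (i,j,k) = (\<Sum>x\<in>{0..i}\<times>{0..j}\<times>{0..k}. if x = (i,j,k) then c * f x else 0)"
    unfolding fmul_apply const_form_def by (rule sum.cong) (auto simp: prod_eq_iff)
  then show "fmul f (const_form c) (i,j,k) = fsmult c f (i,j,k)"
    by simp
qed

lemma fmul_const_form_left: "fmul (const_form c) f = fsmult c f"
  by (metis fmul_commute fmul_const_form_right)

definition shift :: "nat \<Rightarrow> form \<Rightarrow> form" where
  "shift m g = (\<lambda>(i,j,k).
     if m = 0 then (if 0 < i then g (i-1,j,k) else 0)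
     else if m = 1 then (if 0 < j then g (i,j-1,k) else 0)
     else (if 0 < k then g (i,j,k-1) else 0))"

lemma fmul_lform: "fmul g (lform v) = (\<lambda>e. \<Sum>m<3. v m * shift m g e)"
proof (intro ext, clarify)
  fix i j k
  have "fmul (lform v) g (i,j,k) = (\<Sum>x\<in>{0..i}\<times>{0..j}\<times>{0..k}.
      (if x = (1,0,0) then v 0 * g (i - 1, j, k) else 0) +
      (if x = (0,1,0) then v 1 * g (i, j - 1, k) else 0) +
      (if x = (0,0,1) then v 2 * g (i, j, k - 1) else 0))"
    unfolding fmul_apply lform_def by (rule sum.cong) auto
  then show "fmul g (lform v) (i,j,k) = (\<Sum>m<3. v m * shift m g (i,j,k))"
    by (simp add: fmul_commute[of g] sum.distrib shift_def eval_nat_numeral)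
qed

lemma fmul_shift: "fmul g (shift m h) = shift m (fmul g h)"
proof (intro ext, clarify)
  fix i j k
  consider "m = 0" | "m = 1" | "m \<noteq> 0" "m \<noteq> 1" by blast
  then show "fmul g (shift m h) (i,j,k) = shift m (fmul g h) (i,j,k)"
  proof cases
    case 1
    then show ?thesis
      by (cases "i = 0") (auto simp: fmul_apply shift_def
          intro!: sum.mono_neutral_cong_right split: if_split_asm)
  next
    case 2
    then show ?thesis
      by (cases "j = 0") (auto simp: fmul_apply shift_def
          intro!: sum.mono_neutral_cong_right split: if_split_asm)
  next
    case 3
    then show ?thesis
      by (cases "k = 0") (auto simp: fmul_apply shift_def
          intro!: sum.mono_neutral_cong_right split: if_split_asm)
  qed
qed

lemma fmul_sum: "fmul g (\<lambda>e. \<Sum>x\<in>S. w x * H x e) = (\<lambda>e. \<Sum>x\<in>S. w x * fmul g (H x) e)"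
  by (intro ext, clarify) (simp add: fmul_apply sum_distrib_left ac_simps, rule sum.swap)

lemma shift_sum: "shift m (\<lambda>e. \<Sum>x\<in>S. w x * H x e) = (\<lambda>e. \<Sum>x\<in>S. w x * shift m (H x) e)"
  by (intro ext, clarify) (simp add: shift_def)

lemma fmul_assoc_lform: "fmul g (fmul h (lform v)) = fmul (fmul g h) (lform v)"
  by (simp add: fmul_lform fmul_sum fmul_shift)

lemma fmul_lform_swap: "fmul (fmul g (lform v)) (lform w) = fmul (fmul g (lform w)) (lform v)"
  by (metis fmul_assoc_lform fmul_commute)

section \<open>Derivatives and homogeneity\<close>

lemma pd_apply:
  "pd m f (i,j,k) = (if m = 0 then of_nat (i+1) * f (i+1,j,k)
     else if m = 1 then of_nat (j+1) * f (i,j+1,k) else of_nat (k+1) * f (i,j,k+1))"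
  by (simp add: pd_def)

lemma pd_fadd: "pd m (fadd f g) = fadd (pd m f) (pd m g)"
  by (intro ext, clarify) (simp add: pd_apply distrib_left)

lemma pd_fsmult: "pd m (fsmult c f) = fsmult c (pd m f)"
  by (intro ext, clarify) (simp add: pd_apply ac_simps)

lemma pd_sum: "pd m (\<lambda>e. \<Sum>x\<in>S. w x * H x e) = (\<lambda>e. \<Sum>x\<in>S. w x * pd m (H x) e)"
  by (intro ext, clarify) (simp add: pd_apply sum_distrib_left ac_simps)

lemma pd_commute: "pd m (pd n f) = pd n (pd m f)"
  by (intro ext, clarify) (simp add: pd_apply ac_simps)

lemma pd_const_form: "pd m (const_form c) = zero_form"
  by (intro ext, clarify) (simp add: pd_apply const_form_def)

lemma pd_lform: "m < 3 \<Longrightarrow> pd m (lform v) = const_form (v m)"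
  by (intro ext, clarify) (auto simp: pd_apply const_form_def lform_def eval_nat_numeral less_Suc_eq)

lemma pd_fmul_lform:
  "m < 3 \<Longrightarrow> pd m (fmul g (lform v)) = fadd (fmul (pd m g) (lform v)) (fsmult (v m) g)"
  unfolding fmul_lform
  by (intro ext, clarify, cases "i = 0"; cases "j = 0"; cases "k = 0")
     (auto simp: pd_apply shift_def eval_nat_numeral less_Suc_eq algebra_simps of_nat_diff)

definition dderiv :: "(nat \<Rightarrow> complex) \<Rightarrow> form \<Rightarrow> form" where
  "dderiv v f = (\<lambda>e. \<Sum>m<3. v m * pd m f e)"

definition dot3 :: "(nat \<Rightarrow> complex) \<Rightarrow> (nat \<Rightarrow> complex) \<Rightarrow> complex" where
  "dot3 v w = (\<Sum>m<3. v m * w m)"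

lemma dderiv_fadd: "dderiv v (fadd f g) = fadd (dderiv v f) (dderiv v g)"
  by (rule ext) (simp add: dderiv_def pd_fadd distrib_left sum.distrib)

lemma dderiv_fsmult: "dderiv v (fsmult c f) = fsmult c (dderiv v f)"
  by (rule ext) (simp add: dderiv_def pd_fsmult sum_distrib_left ac_simps)

lemma dderiv_zero: "dderiv v zero_form = zero_form"
  using dderiv_fsmult[of v 0 zero_form] by (simp add: fsmult_zero_left)

lemma dderiv_lform: "dderiv v (lform w) = const_form (dot3 v w)"
  by (rule ext) (simp add: dderiv_def pd_lform dot3_def const_form_def)

lemma dderiv_fmul_lform:
  "dderiv v (fmul g (lform w)) = fadd (fmul (dderiv v g) (lform w)) (fsmult (dot3 v w) g)"
proof (rule ext)
  fix e
  have "dderiv v (fmul g (lform w)) e = (\<Sum>m<3. v m * (fmul (lform w) (pd m g) e + w m * g e))"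
    unfolding dderiv_def by (rule sum.cong) (auto simp: pd_fmul_lform fmul_commute)
  also have "\<dots> = fmul (lform w) (\<lambda>e. \<Sum>m<3. v m * pd m g e) e + dot3 v w * g e"
    by (simp add: fmul_sum distrib_left sum.distrib dot3_def sum_distrib_left ac_simps)
  finally show "dderiv v (fmul g (lform w)) e = fadd (fmul (dderiv v g) (lform w)) (fsmult (dot3 v w) g) e"
    by (simp add: dderiv_def fmul_commute)
qed

lemma dderiv_commute: "dderiv v (dderiv w f) = dderiv w (dderiv v f)"
proof -
  have "dderiv v (dderiv w f) = (\<lambda>e. \<Sum>n<3. \<Sum>m<3. v n * w m * pd n (pd m f) e)"
    by (simp add: dderiv_def pd_sum sum_distrib_left ac_simps)
  also have "\<dots> = (\<lambda>e. \<Sum>m<3. \<Sum>n<3. v n * w m * pd m (pd n f) e)"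
    by (subst sum.swap) (simp add: pd_commute)
  also have "\<dots> = dderiv w (dderiv v f)"
    by (simp add: dderiv_def pd_sum sum_distrib_left ac_simps)
  finally show ?thesis .
qed

lemma hom_pd: "hom (Suc d) f \<Longrightarrow> hom d (pd m f)"
  unfolding hom_def by (auto simp: pd_apply split: if_split_asm) fastforce+

lemma hom_sum: "(\<And>x. x \<in> S \<Longrightarrow> hom d (H x)) \<Longrightarrow> hom d (\<lambda>e. \<Sum>x\<in>S. w x * H x e)"
  unfolding hom_def by (metis (no_types, lifting) mult_zero_right sum.neutral)

lemma hom_dderiv: "hom (Suc d) f \<Longrightarrow> hom d (dderiv v f)"
  unfolding dderiv_def by (intro hom_sum hom_pd)

lemma hom_fadd: "hom d f \<Longrightarrow> hom d g \<Longrightarrow> hom d (fadd f g)"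
  unfolding hom_def by (metis add.left_neutral fadd_apply)

lemma hom_fsmult: "hom d f \<Longrightarrow> hom d (fsmult c f)"
  unfolding hom_def by auto

lemma hom_lform: "hom 1 (lform v)"
  unfolding hom_def lform_def by auto

lemma hom_shift: "hom d g \<Longrightarrow> hom (Suc d) (shift m g)"
  unfolding hom_def by (auto simp: shift_def split: if_split_asm) fastforce+

lemma hom_fmul_lform: "hom d g \<Longrightarrow> hom (Suc d) (fmul g (lform v))"
  unfolding fmul_lform by (intro hom_sum hom_shift)

lemma hom_zero_const_form: "hom 0 g \<Longrightarrow> g = const_form (g (0,0,0))"
  unfolding hom_def const_form_def by (intro ext, clarify) auto

lemma hom_const_form: "hom 0 (const_form c)"
  unfolding hom_def const_form_def by simp

lemma dderiv_hom_zero: "hom 0 f \<Longrightarrow> dderiv v f = zero_form"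
  by (subst hom_zero_const_form[of f]) (simp_all add: dderiv_def pd_const_form zero_form_def)

lemma euler_identity: "hom d f \<Longrightarrow> fsmult (of_nat d) f = (\<lambda>e. \<Sum>m<3. shift m (pd m f) e)"
proof (intro ext, clarify)
  fix i j k
  assume "hom d f"
  have "(\<Sum>m<3. shift m (pd m f) (i,j,k)) = (of_nat i + of_nat j + of_nat k) * f (i,j,k)"
    by (cases "i = 0"; cases "j = 0"; cases "k = 0")
       (auto simp: shift_def pd_apply eval_nat_numeral algebra_simps)
  also have "\<dots> = of_nat d * f (i,j,k)"
    using \<open>hom d f\<close> unfolding hom_def by (cases "f (i,j,k) = 0") (auto simp flip: of_nat_add)
  finally show "fsmult (of_nat d) f (i,j,k) = (\<Sum>m<3. shift m (pd m f) (i,j,k))"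
    by simp
qed

section \<open>Transvectants of powers of linear forms\<close>

definition cross3 :: "(nat \<Rightarrow> complex) \<Rightarrow> (nat \<Rightarrow> complex) \<Rightarrow> nat \<Rightarrow> complex" where
  "cross3 a b = (\<lambda>m. if m = 0 then a 1 * b 2 - a 2 * b 1
                     else if m = 1 then a 2 * b 0 - a 0 * b 2
                     else a 0 * b 1 - a 1 * b 0)"

lemma dot3_cross3_left: "dot3 (cross3 a b) a = 0"
  by (simp add: dot3_def cross3_def eval_nat_numeral algebra_simps)

lemma dot3_cross3_right: "dot3 (cross3 a b) b = 0"
  by (simp add: dot3_def cross3_def eval_nat_numeral algebra_simps)

fun lform_pow :: "(nat \<Rightarrow> complex) \<Rightarrow> nat \<Rightarrow> form" where
  "lform_pow v 0 = const_form 1"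
| "lform_pow v (Suc n) = fmul (lform_pow v n) (lform v)"

lemma lform_pow_numerals:
  "lform_pow v 1 = lform v"
  "lform_pow v 2 = fmul (lform v) (lform v)"
  "lform_pow v 3 = fmul (fmul (lform v) (lform v)) (lform v)"
  by (simp_all add: numeral_3_eq_3 numeral_2_eq_2 fmul_const_form_left fsmult_one)

lemma pd_lform_pow:
  assumes "m < 3"
  shows "pd m (lform_pow v (Suc n)) = fsmult (of_nat (Suc n) * v m) (lform_pow v n)"
proof (induction n)
  case 0
  then show ?case
    using assms by (simp add: pd_fmul_lform pd_const_form fmul_zero_left fun_eq_iff)
next
  case (Suc n)
  have "pd m (lform_pow v (Suc (Suc n)))
      = fadd (fmul (pd m (lform_pow v (Suc n))) (lform v)) (fsmult (v m) (lform_pow v (Suc n)))"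
    using pd_fmul_lform[OF assms] by simp
  also have "\<dots> = fsmult (of_nat (Suc (Suc n)) * v m) (lform_pow v (Suc n))"
    unfolding Suc.IH fmul_fsmult_left lform_pow.simps(2)[symmetric]
    by (simp add: fun_eq_iff algebra_simps del: lform_pow.simps)
  finally show ?case .
qed

lemma dmulti_lform_pow:
  assumes "set ms \<subseteq> {..<3}"
  shows "dmulti ms (lform_pow v (length ms + r))
    = fsmult (pochhammer (of_nat r + 1) (length ms) * prod_list (map v ms)) (lform_pow v r)"
  using assms
proof (induction ms arbitrary: r)
  case Nil
  then show ?case by (simp add: fsmult_one)
next
  case (Cons m ms)
  have "dmulti (m # ms) (lform_pow v (length (m # ms) + r))
      = pd m (dmulti ms (lform_pow v (length ms + Suc r)))"
    by simp
  also have "\<dots> = pd m (fsmult (pochhammer (of_nat (Suc r) + 1) (length ms) * prod_list (map v ms))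
      (lform_pow v (Suc r)))"
    using Cons by (simp only: set_simps insert_subset)
  also have "\<dots> = fsmult (pochhammer (of_nat r + 1) (length (m # ms)) * prod_list (map v (m # ms)))
      (lform_pow v r)"
    using Cons.prems by (simp add: pd_fsmult pd_lform_pow fsmult_fsmult pochhammer_rec ac_simps del: lform_pow.simps)
  finally show ?case .
qed

lemma dmulti_lform_pow_length:
  "set ms \<subseteq> {..<3} \<Longrightarrow>
    dmulti ms (lform_pow v (length ms)) = const_form (fact (length ms) * prod_list (map v ms))"
  using dmulti_lform_pow[of ms v 0] by (simp add: pochhammer_fact fsmult_const_form)

lemma sum_permutes_12: "(\<Sum>q\<in>{p. p permutes {1,2::nat}}. g q) = g id + g (transpose 1 2)"
proof -
  have "(\<Sum>q\<in>{p. p permutes {1,2::nat}}. g q)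
      = (\<Sum>b\<in>{1,2}. \<Sum>q\<in>{p. p permutes {2}}. g (transpose 1 b \<circ> q))"
    by (subst sum_over_permutations_insert) auto
  also have "\<dots> = (\<Sum>b\<in>{1,2}. \<Sum>b'\<in>{2}. \<Sum>q\<in>{p. p permutes {}}.
      g (transpose 1 b \<circ> (transpose 2 b' \<circ> q)))"
    by (subst sum_over_permutations_insert) auto
  also have "\<dots> = g id + g (transpose 1 2)"
    by simp
  finally show ?thesis .
qed

lemma sum_signed_perms3:
  "(\<Sum>p\<in>perms3. of_int (sign p) * F (p 0) (p 1) (p 2)) =
     F 0 1 2 - F 0 2 1 - F 1 0 2 + F 1 2 0 + F 2 0 1 - (F 2 1 0 :: complex)"
proof -
  have "(\<Sum>p\<in>perms3. of_int (sign p) * F (p 0) (p 1) (p 2)) =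
    (\<Sum>b\<in>{0,1,2}. \<Sum>q\<in>{p. p permutes {1,2}}. of_int (sign (transpose 0 b \<circ> q))
       * F ((transpose 0 b \<circ> q) 0) ((transpose 0 b \<circ> q) 1) ((transpose 0 b \<circ> q) 2))"
    unfolding perms3_def by (subst sum_over_permutations_insert) auto
  also have "\<dots> = (\<Sum>b\<in>{0,1,2}.
      of_int (sign (transpose 0 b)) * F (transpose 0 b 0) (transpose 0 b 1) (transpose 0 b 2)
      + of_int (sign (transpose 0 b \<circ> transpose 1 2)) * F (transpose 0 b 0) (transpose 0 b 2) (transpose 0 b 1))"
    by (simp only: sum_permutes_12) (simp add: transpose_def)
  also have "\<dots> = F 0 1 2 - F 0 2 1 - F 1 0 2 + F 1 2 0 + F 2 0 1 - F 2 1 0"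
    by (simp add: sign_compose permutation_swap_id sign_swap_id transpose_def)
  finally show ?thesis .
qed

lemma sum_signed_perms3_cross3:
  "(\<Sum>p\<in>perms3. of_int (sign p) * a (p 1) * b (p 2) * F (p 0)) = (\<Sum>m<3. cross3 a b m * F m)"
  using sum_signed_perms3[of "\<lambda>x y z. a y * b z * F x"]
  by (simp add: cross3_def eval_nat_numeral algebra_simps)

lemma perms3_less: "p \<in> perms3 \<Longrightarrow> x < 3 \<Longrightarrow> p x < 3"
  unfolding perms3_def using permutes_in_image[of p "{0,1,2}" x] by auto

lemma sum_lists_length_Suc:
  "(\<Sum>ps\<in>{ps. length ps = Suc n \<and> set ps \<subseteq> S}. G ps) =
   (\<Sum>p\<in>S. \<Sum>ps\<in>{ps. length ps = n \<and> set ps \<subseteq> S}. G (p # ps))"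
proof -
  have "{ps. length ps = Suc n \<and> set ps \<subseteq> S}
      = (\<lambda>(p,ps). p # ps) ` (S \<times> {ps. length ps = n \<and> set ps \<subseteq> S})"
    by (auto simp: image_iff length_Suc_conv)
  moreover have "inj_on (\<lambda>(p,ps). p # ps) (S \<times> {ps. length ps = n \<and> set ps \<subseteq> S})"
    by (auto simp: inj_on_def)
  ultimately show ?thesis
    by (simp add: sum.reindex sum.cartesian_product split_def)
qed

lemma signed_sum_dmulti_eq_funpow_dderiv:
  "(\<lambda>e. \<Sum>ps\<in>{ps. length ps = n \<and> set ps \<subseteq> perms3}.
      (\<Prod>p\<leftarrow>ps. of_int (sign p) * a (p 1) * b (p 2)) * dmulti (map (\<lambda>p. p 0) ps) f e)
   = (dderiv (cross3 a b) ^^ n) f"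
proof (induction n)
  case 0
  have "{ps. length ps = 0 \<and> set ps \<subseteq> perms3} = {[]}" by auto
  then show ?case by simp
next
  case (Suc n)
  let ?w = "\<lambda>p. of_int (sign p) * a (p 1) * b (p 2)"
  have "(\<lambda>e. \<Sum>ps\<in>{ps. length ps = Suc n \<and> set ps \<subseteq> perms3}.
          (\<Prod>p\<leftarrow>ps. ?w p) * dmulti (map (\<lambda>p. p 0) ps) f e)
      = (\<lambda>e. \<Sum>p\<in>perms3. ?w p * pd (p 0) (\<lambda>e. \<Sum>ps\<in>{ps. length ps = n \<and> set ps \<subseteq> perms3}.
          (\<Prod>p\<leftarrow>ps. ?w p) * dmulti (map (\<lambda>p. p 0) ps) f e) e)"
    by (simp only: sum_lists_length_Suc pd_sum sum_distrib_left list.map prod_list.Cons dmulti.simps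
        mult.assoc)
  also have "\<dots> = (\<lambda>e. \<Sum>m<3. cross3 a b m * pd m ((dderiv (cross3 a b) ^^ n) f) e)"
    unfolding Suc.IH by (rule ext) (rule sum_signed_perms3_cross3)
  finally show ?case
    by (simp add: dderiv_def[of "cross3 a b" "(dderiv (cross3 a b) ^^ n) f"])
qed

theorem transv_lform_pow:
  "transv n f (lform_pow a n) (lform_pow b n) = fsmult ((fact n)\<^sup>2) ((dderiv (cross3 a b) ^^ n) f)"
proof (rule ext)
  fix e
  let ?P = "{ps. length ps = n \<and> set ps \<subseteq> perms3}"
  have "transv n f (lform_pow a n) (lform_pow b n) e = (\<Sum>ps\<in>?P. (fact n)\<^sup>2 *
      ((\<Prod>p\<leftarrow>ps. of_int (sign p) * a (p 1) * b (p 2)) * dmulti (map (\<lambda>p. p 0) ps) f e))"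
    unfolding transv_def
  proof (rule sum.cong)
    fix ps assume "ps \<in> ?P"
    then have "set (map (\<lambda>p. p k) ps) \<subseteq> {..<3}" "length ps = n" if "k < 3" for k
      using perms3_less that by auto
    then have dmulti_pow: "dmulti (map (\<lambda>p. p k) ps) (lform_pow v n)
        = const_form (fact n * prod_list (map v (map (\<lambda>p. p k) ps)))" if "k < 3" for k v
      using dmulti_lform_pow_length[of "map (\<lambda>p. p k) ps" v] that by auto
    have signs: "of_int (\<Prod>p\<leftarrow>ps. sign p)
        * (prod_list (map a (map (\<lambda>p. p 1) ps)) * prod_list (map b (map (\<lambda>p. p 2) ps)))
        = (\<Prod>p\<leftarrow>ps. of_int (sign p) * a (p 1) * b (p 2))"
      by (induction ps) (simp_all add: ac_simps)
    show "of_int (\<Prod>p\<leftarrow>ps. sign p) *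
        fmul (fmul (dmulti (map (\<lambda>p. p 0) ps) f) (dmulti (map (\<lambda>p. p 1) ps) (lform_pow a n)))
          (dmulti (map (\<lambda>p. p 2) ps) (lform_pow b n)) e
      = (fact n)\<^sup>2 * ((\<Prod>p\<leftarrow>ps. of_int (sign p) * a (p 1) * b (p 2)) * dmulti (map (\<lambda>p. p 0) ps) f e)"
      using signs by (simp add: dmulti_pow fmul_const_form_right power2_eq_square ac_simps)
  qed simp
  also have "\<dots> = fsmult ((fact n)\<^sup>2) ((dderiv (cross3 a b) ^^ n) f) e"
    by (simp flip: sum_distrib_left signed_sum_dmulti_eq_funpow_dderiv)
  finally show "transv n f (lform_pow a n) (lform_pow b n) e = fsmult ((fact n)\<^sup>2) ((dderiv (cross3 a b) ^^ n) f) e" .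
qed

section \<open>The kernel of the derivative along a \<times> b\<close>

lemma cross3_eq_zero_parallel:
  assumes "\<forall>m<3. cross3 a b m = 0" and "i < 3" "k < 3"
  shows "b i * a k - a i * b k = 0"
proof -
  have "cross3 a b 0 = 0" "cross3 a b 1 = 0" "cross3 a b 2 = 0"
    using assms(1) by auto
  with assms(2,3) show ?thesis
    by (auto simp: cross3_def eval_nat_numeral less_Suc_eq algebra_simps)
qed

lemma cross3_nonzero:
  assumes "lin_indep2 a b"
  obtains m where "m < 3" "cross3 a b m \<noteq> 0"
proof (rule ccontr)
  assume "\<not> thesis"
  with that have zero: "\<forall>m<3. cross3 a b m = 0" by blast
  have indep: "u = 0 \<and> v = 0" if "\<And>k. k < 3 \<Longrightarrow> u * a k + v * b k = 0" for u v
    using assms that unfolding lin_indep2_def by blast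
  show False
  proof (cases "\<forall>k<3. a k = 0")
    case True
    then show False using indep[of 1 0] by simp
  next
    case False
    then obtain i where "i < 3" "a i \<noteq> 0" by blast
    with indep[of "b i" "- a i"] cross3_eq_zero_parallel[OF zero] show False by simp
  qed
qed

text \<open>The hypothesis is the matrix identity a p^T + b q^T + l (a \<times> b)^T = 1.\<close>
locale dual_bases =
  fixes a b p q l :: "nat \<Rightarrow> complex"
  assumes dual: "\<And>i j. i < 3 \<Longrightarrow> j < 3 \<Longrightarrow>
    a i * p j + b i * q j + l i * cross3 a b j = (if i = j then 1 else 0)"

lemma cross3_adjugate:
  assumes "i < 3" "j < 3"
  shows "a i * cross3 b e j + b i * cross3 e a j + e i * cross3 a b j
     = (if i = j then dot3 (cross3 a b) e else 0)"
proof -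
  from assms have "i = 0 \<or> i = 1 \<or> i = 2" "j = 0 \<or> j = 1 \<or> j = 2" by auto
  then show ?thesis
    by (elim disjE) (simp_all add: cross3_def dot3_def eval_nat_numeral algebra_simps)
qed

lemma dual_bases_exist:
  assumes "lin_indep2 a b"
  obtains p q l where "dual_bases a b p q l"
proof -
  \<comment> \<open>Over \<complex> the vector a \<times> b may be isotropic, hence the conjugate.\<close>
  define e where "e = (\<lambda>m. cnj (cross3 a b m))"
  define N where "N = dot3 (cross3 a b) e"
  obtain m where m: "m < 3" "cross3 a b m \<noteq> 0"
    using cross3_nonzero[OF assms] .
  have "N = of_real (\<Sum>k<3. (cmod (cross3 a b k))\<^sup>2)"
    by (simp only: N_def dot3_def e_def of_real_sum complex_norm_square)
  moreover have "(\<Sum>k<3. (cmod (cross3 a b k))\<^sup>2) > 0"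
    by (rule sum_pos2[of _ m]) (use m in auto)
  ultimately have "N \<noteq> 0" by (metis of_real_eq_0_iff less_irrefl)
  have "dual_bases a b (\<lambda>j. cross3 b e j / N) (\<lambda>j. cross3 e a j / N) (\<lambda>i. e i / N)"
  proof
    fix i j :: nat
    assume "i < 3" "j < 3"
    have "a i * (cross3 b e j / N) + b i * (cross3 e a j / N) + e i / N * cross3 a b j
        = (a i * cross3 b e j + b i * cross3 e a j + e i * cross3 a b j) / N"
      by (simp add: add_divide_distrib)
    also have "\<dots> = (if i = j then 1 else 0)"
      using cross3_adjugate[OF \<open>i < 3\<close> \<open>j < 3\<close>] \<open>N \<noteq> 0\<close> by (simp add: N_def)
    finally show "a i * (cross3 b e j / N) + b i * (cross3 e a j / N) + e i / N * cross3 a b j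
        = (if i = j then 1 else 0)" .
  qed
  then show ?thesis using that by blast
qed

context dual_bases
begin

abbreviation D :: "form \<Rightarrow> form" where "D \<equiv> dderiv (cross3 a b)"

lemma D_lform_left: "D (lform a) = zero_form"
  by (simp add: dderiv_lform dot3_cross3_left const_form_zero)

lemma D_lform_right: "D (lform b) = zero_form"
  by (simp add: dderiv_lform dot3_cross3_right const_form_zero)

lemma D_fmul_lform_left: "D (fmul g (lform a)) = fmul (D g) (lform a)"
  by (simp add: dderiv_fmul_lform dot3_cross3_left fsmult_zero_left fadd_zero_right)

lemma D_fmul_lform_right: "D (fmul g (lform b)) = fmul (D g) (lform b)"
  by (simp add: dderiv_fmul_lform dot3_cross3_right fsmult_zero_left fadd_zero_right)

lemma euler_decomposition:
  assumes "hom d f"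
  shows "fsmult (of_nat d) f =
    fadd (fadd (fmul (dderiv p f) (lform a)) (fmul (dderiv q f) (lform b))) (fmul (D f) (lform l))"
    (is "_ = ?F")
proof (rule ext)
  fix e
  let ?X = "\<lambda>i j. shift i (pd j f) e"
  have "?F e = (\<Sum>i<3. \<Sum>j<3. (a i * p j + b i * q j + l i * cross3 a b j) * ?X i j)"
    unfolding dderiv_def fmul_lform shift_sum
    by (simp add: sum_distrib_left distrib_left distrib_right sum.distrib ac_simps)
  also have "\<dots> = (\<Sum>i<3. \<Sum>j<3. if i = j then ?X i j else 0)"
    by (intro sum.cong refl) (simp add: dual)
  also have "\<dots> = (\<Sum>i<3. ?X i i)"
    by simp
  also have "\<dots> = fsmult (of_nat d) f e"
    using euler_identity[OF assms] by simp
  finally show "fsmult (of_nat d) f e = ?F e" by simp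
qed

lemma euler_decomposition_D_in_ideal:
  assumes "hom (Suc d) f" and "D f = fadd (fmul K1 (lform a)) (fmul K2 (lform b))"
  shows "fsmult (of_nat (Suc d)) f = fadd (fmul (fadd (dderiv p f) (fmul K1 (lform l))) (lform a))
                                          (fmul (fadd (dderiv q f) (fmul K2 (lform l))) (lform b))"
  using euler_decomposition[OF assms(1)]
  by (simp add: assms(2) fmul_fadd_left fmul_lform_swap[of K1 a l] fmul_lform_swap[of K2 b l]
      fun_eq_iff add_ac)

lemma kernel_D_in_ideal:
  assumes "hom (Suc d) f" and "D f = zero_form"
  obtains G H where "hom d G" "hom d H" "D G = zero_form" "D H = zero_form"
    "f = fadd (fmul G (lform a)) (fmul H (lform b))"
proof -
  define c :: complex where "c = 1 / of_nat (Suc d)"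
  have "D f = fadd (fmul zero_form (lform a)) (fmul zero_form (lform b))"
    using assms(2) by (simp add: fmul_zero_left fadd_zero_right)
  from fsmult_inverse[OF _ euler_decomposition_D_in_ideal[OF assms(1) this]]
  have "f = fadd (fmul (fsmult c (dderiv p f)) (lform a)) (fmul (fsmult c (dderiv q f)) (lform b))"
    by (simp add: c_def fmul_zero_left fadd_zero_right fsmult_fadd fmul_fsmult_left del: of_nat_Suc)
  moreover have "D (fsmult c (dderiv v f)) = zero_form" for v
    by (simp add: dderiv_fsmult dderiv_commute[of _ v] assms(2) dderiv_zero fsmult_zero_right)
  ultimately show thesis
    using that assms(1) by (meson hom_dderiv hom_fsmult)
qed

lemma D_in_ideal_imp_in_ideal:
  assumes "hom (Suc (Suc d)) f" and "hom d K1" "hom d K2"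
    and "D f = fadd (fmul K1 (lform a)) (fmul K2 (lform b))"
  obtains G H where "hom (Suc d) G" "hom (Suc d) H" "f = fadd (fmul G (lform a)) (fmul H (lform b))"
proof -
  define c :: complex where "c = 1 / of_nat (Suc (Suc d))"
  from fsmult_inverse[OF _ euler_decomposition_D_in_ideal[OF assms(1) assms(4)]]
  have "f = fadd (fmul (fsmult c (fadd (dderiv p f) (fmul K1 (lform l)))) (lform a))
                 (fmul (fsmult c (fadd (dderiv q f) (fmul K2 (lform l)))) (lform b))"
    by (simp add: c_def fsmult_fadd fmul_fsmult_left fmul_fadd_left del: of_nat_Suc)
  moreover have "hom (Suc d) (fsmult c (fadd (dderiv v f) (fmul K (lform l))))" if "hom d K" for v K
    using assms(1) that by (intro hom_fsmult hom_fadd hom_dderiv hom_fmul_lform)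
  ultimately show thesis
    using that assms(2,3) by blast
qed

lemma kernel_D_linear:
  assumes "hom 1 f"
  shows "D f = zero_form \<longleftrightarrow> (\<exists>g0 h0. f = fadd (fsmult g0 (lform a)) (fsmult h0 (lform b)))"
proof
  assume "D f = zero_form"
  then obtain G H where "hom 0 G" "hom 0 H" "f = fadd (fmul G (lform a)) (fmul H (lform b))"
    using kernel_D_in_ideal[of 0 f] assms by (metis One_nat_def)
  then show "\<exists>g0 h0. f = fadd (fsmult g0 (lform a)) (fsmult h0 (lform b))"
    by (metis hom_zero_const_form fmul_const_form_left)
qed (auto simp: dderiv_fadd dderiv_fsmult D_lform_left D_lform_right fsmult_zero_right fadd_zero_right)

lemma kernel_D_quadratic:
  assumes "hom 2 f"
  shows "D f = zero_form \<longleftrightarrow>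
    (\<exists>g0 h0 k0. f = fadd (fadd (fsmult g0 (fmul (lform a) (lform a))) (fsmult h0 (fmul (lform a) (lform b))))
                         (fsmult k0 (fmul (lform b) (lform b))))"
proof
  assume "D f = zero_form"
  then obtain G H where "hom 1 G" "hom 1 H" "D G = zero_form" "D H = zero_form"
    and f: "f = fadd (fmul G (lform a)) (fmul H (lform b))"
    using kernel_D_in_ideal[of 1 f] assms by (auto simp: numeral_2_eq_2)
  then obtain \<alpha> \<beta> \<gamma> \<delta> where "G = fadd (fsmult \<alpha> (lform a)) (fsmult \<beta> (lform b))"
      "H = fadd (fsmult \<gamma> (lform a)) (fsmult \<delta> (lform b))"
    using kernel_D_linear by meson
  with f have "f = fadd (fadd (fsmult \<alpha> (fmul (lform a) (lform a))) (fsmult (\<beta> + \<gamma>) (fmul (lform a) (lform b))))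
                         (fsmult \<delta> (fmul (lform b) (lform b)))"
    by (simp add: fun_eq_iff fmul_fadd_left fmul_fsmult_left fmul_commute[of "lform b" "lform a"] algebra_simps)
  then show "\<exists>g0 h0 k0. f = fadd (fadd (fsmult g0 (fmul (lform a) (lform a))) (fsmult h0 (fmul (lform a) (lform b))))
                         (fsmult k0 (fmul (lform b) (lform b)))"
    by blast
qed (auto simp: dderiv_fadd dderiv_fsmult D_fmul_lform_left D_fmul_lform_right D_lform_left
      D_lform_right fmul_zero_left fsmult_zero_right fadd_zero_right)

lemma kernel_D_cubic:
  assumes "hom 3 f"
  shows "D f = zero_form \<longleftrightarrow>
    (\<exists>g0 h0 k0 i0. f = fadd (fadd (fadd (fsmult g0 (fmul (fmul (lform a) (lform a)) (lform a)))
                                         (fsmult h0 (fmul (fmul (lform a) (lform a)) (lform b))))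
                                   (fsmult k0 (fmul (fmul (lform a) (lform b)) (lform b))))
                             (fsmult i0 (fmul (fmul (lform b) (lform b)) (lform b))))"
proof
  assume "D f = zero_form"
  then obtain G H where "hom 2 G" "hom 2 H" "D G = zero_form" "D H = zero_form"
    and f: "f = fadd (fmul G (lform a)) (fmul H (lform b))"
    using kernel_D_in_ideal[of 2 f] assms by (auto simp: numeral_3_eq_3 numeral_2_eq_2)
  then obtain \<alpha>1 \<beta>1 \<gamma>1 \<alpha>2 \<beta>2 \<gamma>2 where
      "G = fadd (fadd (fsmult \<alpha>1 (fmul (lform a) (lform a))) (fsmult \<beta>1 (fmul (lform a) (lform b))))
                (fsmult \<gamma>1 (fmul (lform b) (lform b)))"
      "H = fadd (fadd (fsmult \<alpha>2 (fmul (lform a) (lform a))) (fsmult \<beta>2 (fmul (lform a) (lform b))))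
                (fsmult \<gamma>2 (fmul (lform b) (lform b)))"
    using kernel_D_quadratic by meson
  with f have "f = fadd (fadd (fadd (fsmult \<alpha>1 (fmul (fmul (lform a) (lform a)) (lform a)))
                                  (fsmult (\<beta>1 + \<alpha>2) (fmul (fmul (lform a) (lform a)) (lform b))))
                            (fsmult (\<gamma>1 + \<beta>2) (fmul (fmul (lform a) (lform b)) (lform b))))
                      (fsmult \<gamma>2 (fmul (fmul (lform b) (lform b)) (lform b)))"
    by (simp add: fun_eq_iff fmul_fadd_left fmul_fsmult_left fmul_lform_swap[of "lform a" b a]
        fmul_lform_swap[of "lform b" b a] fmul_commute[of "lform b" "lform a"] algebra_simps)
  then show "\<exists>g0 h0 k0 i0. f = fadd (fadd (fadd (fsmult g0 (fmul (fmul (lform a) (lform a)) (lform a)))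
                                         (fsmult h0 (fmul (fmul (lform a) (lform a)) (lform b))))
                                   (fsmult k0 (fmul (fmul (lform a) (lform b)) (lform b))))
                             (fsmult i0 (fmul (fmul (lform b) (lform b)) (lform b)))"
    by blast
qed (auto simp: dderiv_fadd dderiv_fsmult D_fmul_lform_left D_fmul_lform_right D_lform_left
      D_lform_right fmul_zero_left fsmult_zero_right fadd_zero_right)

lemma D_fmul_ideal:
  "D (fadd (fmul G (lform a)) (fmul H (lform b))) = fadd (fmul (D G) (lform a)) (fmul (D H) (lform b))"
  by (simp add: dderiv_fadd D_fmul_lform_left D_fmul_lform_right)

lemma kernel_D2_quadratic:
  assumes "hom 2 f"
  shows "D (D f) = zero_form \<longleftrightarrow>
    (\<exists>g h. hom 1 g \<and> hom 1 h \<and> f = fadd (fmul g (lform a)) (fmul h (lform b)))"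
proof
  assume "D (D f) = zero_form"
  moreover have "hom 1 (D f)"
    using hom_dderiv[of 1 f] assms by (simp add: numeral_2_eq_2)
  ultimately obtain \<alpha> \<beta> where "D f = fadd (fmul (const_form \<alpha>) (lform a)) (fmul (const_form \<beta>) (lform b))"
    using kernel_D_linear by (auto simp: fmul_const_form_left)
  with assms obtain G H where "hom 1 G" "hom 1 H" "f = fadd (fmul G (lform a)) (fmul H (lform b))"
    using D_in_ideal_imp_in_ideal[of 0 f] hom_const_form by (metis numeral_2_eq_2 One_nat_def)
  then show "\<exists>g h. hom 1 g \<and> hom 1 h \<and> f = fadd (fmul g (lform a)) (fmul h (lform b))"
    by blast
next
  assume "\<exists>g h. hom 1 g \<and> hom 1 h \<and> f = fadd (fmul g (lform a)) (fmul h (lform b))"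
  then show "D (D f) = zero_form"
    by (auto simp: D_fmul_ideal dderiv_hom_zero hom_dderiv fmul_zero_left fadd_zero_right)
qed

lemma kernel_D3_cubic:
  assumes "hom 3 f"
  shows "D (D (D f)) = zero_form \<longleftrightarrow>
    (\<exists>g h. hom 2 g \<and> hom 2 h \<and> f = fadd (fmul g (lform a)) (fmul h (lform b)))"
proof
  assume "D (D (D f)) = zero_form"
  moreover have "hom 2 (D f)"
    using hom_dderiv[of 2 f] assms by (simp add: numeral_3_eq_3 numeral_2_eq_2)
  ultimately obtain K1 K2 where "hom 1 K1" "hom 1 K2"
      "D f = fadd (fmul K1 (lform a)) (fmul K2 (lform b))"
    using kernel_D2_quadratic by blast
  with assms obtain G H where "hom 2 G" "hom 2 H" "f = fadd (fmul G (lform a)) (fmul H (lform b))"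
    using D_in_ideal_imp_in_ideal[of 1 f] by (metis numeral_3_eq_3 numeral_2_eq_2 One_nat_def)
  then show "\<exists>g h. hom 2 g \<and> hom 2 h \<and> f = fadd (fmul g (lform a)) (fmul h (lform b))"
    by blast
next
  assume "\<exists>g h. hom 2 g \<and> hom 2 h \<and> f = fadd (fmul g (lform a)) (fmul h (lform b))"
  then show "D (D (D f)) = zero_form"
    by (auto simp: D_fmul_ideal dderiv_hom_zero hom_dderiv fmul_zero_left fadd_zero_right numeral_2_eq_2)
qed

lemma kernel_D2_cubic:
  assumes "hom 3 f"
  shows "D (D f) = zero_form \<longleftrightarrow>
    (\<exists>g h k. hom 1 g \<and> hom 1 h \<and> hom 1 k \<and>
       f = fadd (fadd (fmul g (fmul (lform a) (lform a))) (fmul h (fmul (lform a) (lform b))))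
                (fmul k (fmul (lform b) (lform b))))"
proof
  assume DDf: "D (D f) = zero_form"
  have hom_derivs: "hom 2 (dderiv v f)" for v
    using hom_dderiv[of 2 f] assms by (simp add: numeral_3_eq_3 numeral_2_eq_2)
  obtain g0 h0 k0 where "D f = fadd (fadd (fsmult g0 (fmul (lform a) (lform a))) (fsmult h0 (fmul (lform a) (lform b))))
                         (fsmult k0 (fmul (lform b) (lform b)))"
    using kernel_D_quadratic[OF hom_derivs] DDf by blast
  then have "D f = fadd (fmul (fadd (fsmult g0 (lform a)) (fsmult h0 (lform b))) (lform a))
                        (fmul (fsmult k0 (lform b)) (lform b))"
    by (simp add: fmul_fadd_left fmul_fsmult_left fmul_commute[of "lform b" "lform a"])
  from euler_decomposition_D_in_ideal[of 2, OF _ this] assms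
  have euler: "fsmult 3 f = fadd
      (fmul (fadd (dderiv p f) (fmul (fadd (fsmult g0 (lform a)) (fsmult h0 (lform b))) (lform l))) (lform a))
      (fmul (fadd (dderiv q f) (fmul (fsmult k0 (lform b)) (lform l))) (lform b))"
    by (simp add: numeral_3_eq_3)
  have "D (D (dderiv v f)) = zero_form" for v
    by (simp add: dderiv_commute[of _ v] DDf dderiv_zero)
  then obtain P1 P2 Q1 Q2 where P: "hom 1 P1" "hom 1 P2" "dderiv p f = fadd (fmul P1 (lform a)) (fmul P2 (lform b))"
    and Q: "hom 1 Q1" "hom 1 Q2" "dderiv q f = fadd (fmul Q1 (lform a)) (fmul Q2 (lform b))"
    using kernel_D2_quadratic[OF hom_derivs] by meson
  define g where "g = fsmult (1/3) (fadd P1 (fsmult g0 (lform l)))"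
  define h where "h = fsmult (1/3) (fadd (fadd P2 Q1) (fsmult h0 (lform l)))"
  define k where "k = fsmult (1/3) (fadd Q2 (fsmult k0 (lform l)))"
  have "hom 1 g" "hom 1 h" "hom 1 k"
    unfolding g_def h_def k_def by (intro hom_fsmult hom_fadd P Q hom_lform)+
  moreover have "f = fadd (fadd (fmul g (fmul (lform a) (lform a))) (fmul h (fmul (lform a) (lform b))))
                          (fmul k (fmul (lform b) (lform b)))"
    using fsmult_inverse[OF _ euler]
    by (simp add: g_def h_def k_def P Q fun_eq_iff fmul_fadd_left fmul_fsmult_left fmul_assoc_lform
        fmul_commute[of "lform a" "lform l"] fmul_commute[of "lform b" "lform l"]
        fmul_lform_swap[of "lform l" b a] fmul_lform_swap[of P2 b a] algebra_simps)
  ultimately show "\<exists>g h k. hom 1 g \<and> hom 1 h \<and> hom 1 k \<and>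
       f = fadd (fadd (fmul g (fmul (lform a) (lform a))) (fmul h (fmul (lform a) (lform b))))
                (fmul k (fmul (lform b) (lform b)))"
    by blast
next
  assume "\<exists>g h k. hom 1 g \<and> hom 1 h \<and> hom 1 k \<and>
       f = fadd (fadd (fmul g (fmul (lform a) (lform a))) (fmul h (fmul (lform a) (lform b))))
                (fmul k (fmul (lform b) (lform b)))"
  then show "D (D f) = zero_form"
    by (auto simp: fmul_assoc_lform dderiv_fadd D_fmul_lform_left D_fmul_lform_right
        dderiv_hom_zero hom_dderiv fmul_zero_left fadd_zero_right)
qed

end

theorem lemma5p1:
  fixes a b :: "nat \<Rightarrow> complex"
  assumes "lin_indep2 a b"
  defines "A \<equiv> lform a" and "B \<equiv> lform b"
  shows
   "(\<forall>f. hom 1 f \<longrightarrow>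
      (transv 1 f A B = zero_form \<longleftrightarrow>
       (\<exists>g0 h0. f = fadd (fsmult g0 A) (fsmult h0 B))))
  \<and> (\<forall>f. hom 2 f \<longrightarrow>
      (transv 1 f A B = zero_form \<longleftrightarrow>
       (\<exists>g0 h0 k0. f = fadd (fadd (fsmult g0 (fmul A A)) (fsmult h0 (fmul A B)))
                            (fsmult k0 (fmul B B)))))
  \<and> (\<forall>f. hom 2 f \<longrightarrow>
      (transv 2 f (fmul A A) (fmul B B) = zero_form \<longleftrightarrow>
       (\<exists>g h. hom 1 g \<and> hom 1 h \<and> f = fadd (fmul g A) (fmul h B))))
  \<and> (\<forall>f. hom 3 f \<longrightarrow>
      (transv 1 f A B = zero_form \<longleftrightarrow>
       (\<exists>g0 h0 k0 i0. f = fadd (fadd (fadd (fsmult g0 (fmul (fmul A A) A))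
                                         (fsmult h0 (fmul (fmul A A) B)))
                                   (fsmult k0 (fmul (fmul A B) B)))
                             (fsmult i0 (fmul (fmul B B) B)))))
  \<and> (\<forall>f. hom 3 f \<longrightarrow>
      (transv 2 f (fmul A A) (fmul B B) = zero_form \<longleftrightarrow>
       (\<exists>g h k. hom 1 g \<and> hom 1 h \<and> hom 1 k \<and>
          f = fadd (fadd (fmul g (fmul A A)) (fmul h (fmul A B))) (fmul k (fmul B B)))))
  \<and> (\<forall>f. hom 3 f \<longrightarrow>
      (transv 3 f (fmul (fmul A A) A) (fmul (fmul B B) B) = zero_form \<longleftrightarrow>
       (\<exists>g h. hom 2 g \<and> hom 2 h \<and> f = fadd (fmul g A) (fmul h B))))"
proof -
  obtain p q l where "dual_bases a b p q l"
    using dual_bases_exist[OF assms(1)] .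
  then interpret dual_bases a b p q l .
  have transv:
    "transv 1 f A B = D f"
    "transv 2 f (fmul A A) (fmul B B) = fsmult 4 (D (D f))"
    "transv 3 f (fmul (fmul A A) A) (fmul (fmul B B) B) = fsmult 36 (D (D (D f)))" for f
    using transv_lform_pow[of 1 f a b] transv_lform_pow[of 2 f a b] transv_lform_pow[of 3 f a b]
    unfolding lform_pow_numerals by (simp_all add: A_def B_def fsmult_one eval_nat_numeral)
  show ?thesis
    unfolding transv fsmult_eq_zero_iff[of 4, simplified] fsmult_eq_zero_iff[of 36, simplified]
    by (simp add: A_def B_def kernel_D_linear kernel_D_quadratic kernel_D_cubic kernel_D2_quadratic
        kernel_D2_cubic kernel_D3_cubic)
qed

end
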